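(* Let $(\mathbf A,\perp,\{\mathsf{t},\mathsf{f}\})$ be an $\mathfrak{N}_w^1$-model. For all $x,y,z\in A$: $x\otimes y\precsim z$ iff $x\precsim y\supset z$. Consequently, $(A,\precsim,\otimes,\supset,{}^{*})$ is a partially ordered commutative involutive residuated groupoid.
   Context: A weak $\mathcal{N}$-algebra is an algebra $(A,\otimes,\circ,{}^{*})$ of type $(2,2,1)$ with $\otimes,\circ$ commutative (not necessarily associative), $x^{**}=x$, and $(x\otimes y)\circ z=(x\otimes z)\circ y$. Term operations: $x\Rightarrow y:=(x\circ y^{*})^{*}$, $x\Leftrightarrow y:=(x\Rightarrow y)\otimes(y\Rightarrow x)$, $x\not\Leftrightarrow y:=(x\Leftrightarrow y)^{*}$, $x\not\Leftrightarrow y\not\Leftrightarrow z:=((x\not\Leftrightarrow y)\otimes(x\not\Leftrightarrow z))\otimes(y\not\Leftrightarrow z)$, $x\oplus y:=(x^{*}\otimes y^{*})^{*}$, $x\supset y:=x^{*}\oplus y$. With $\mathsf{t}\ne\mathsf{f}$ symbols not in $A$, $\overline A=A\cup\{\mathsf{t},\mathsf{f}\}$, an $\mathfrak{N}_w$-model is $(\mathbf A,\perp,\{\mathsf{t},\mathsf{f}\})$, $\mathbf A$ a weak $\mathcal{N}$-algebra, $\perp\subseteq\overline A\times\overline A$, such that for all $x,y,z\in A$: (a) $x\perp x^{*}$; (b) $x\perp y^{*}$ and $y\perp x^{*}$ imply $x=y$; (c) $x\perp y$ iff $x\circ y\perp\mathsf{t}$; (d) $x\perp\mathsf{t}$ iff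 $x^{*}\perp\mathsf{f}$; (e) $x\perp\mathsf{f}$ and $y\perp\mathsf{f}$ iff $x\otimes y\perp\mathsf{f}$; (f) $(x\circ y^{*})^{*}\perp(x\circ y)^{*}$; (g) $x\perp y$ and $x\perp\mathsf{f}$ imply $y\perp\mathsf{t}$; (h) $(x\not\Leftrightarrow y\not\Leftrightarrow z)\perp((x\Rightarrow y)\Rightarrow((y\Rightarrow z)\Rightarrow(x\Rightarrow z)))^{*}$. An $\mathfrak{N}_w^1$-model is an $\mathfrak{N}_w$-model such that for all $x,y,z\in A$: $x\perp\mathsf{f}$ implies $x\oplus y\perp\mathsf{f}$; and $x\perp y^{*}$, $y\perp z^{*}$ imply $x\perp z^{*}$. On $A$ define $x\precsim y$ iff $x\perp y^{*}$. A partially ordered commutative involutive residuated groupoid is a structure $(A,\leq,\otimes,\supset,{}^{*})$ where $(A,\otimes)$ is a commutative groupoid, $(A,\leq)$ is a poset, ${}^{*}$ is an antitone involution ($x^{**}=x$ and $x\leq y$ implies $y^{*}\leq x^{*}$), and $x\otimes y\leq z$ iff $x\leq y\supset z$ for all $x,y,z$. *)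

theory Defs
  imports Main
begin

text \<open>The carrier A is the whole type 'a. The extended carrier A \<union> {t, f}
  is the type 'a ext, with t and f fresh elements.\<close>

datatype 'a ext = El 'a | T_el | F_el

definition weak_N_algebra ::
  "('a \<Rightarrow> 'a \<Rightarrow> 'a) \<Rightarrow> ('a \<Rightarrow> 'a \<Rightarrow> 'a) \<Rightarrow> ('a \<Rightarrow> 'a) \<Rightarrow> bool" where
  "weak_N_algebra ot ci st \<longleftrightarrow>
     (\<forall>x y. ot x y = ot y x) \<and> (\<forall>x y. ci x y = ci y x) \<and>
     (\<forall>x. st (st x) = x) \<and>
     (\<forall>x y z. ci (ot x y) z = ci (ot x z) y)"

definition imp_op :: "('a \<Rightarrow> 'a \<Rightarrow> 'a) \<Rightarrow> ('a \<Rightarrow> 'a) \<Rightarrow> 'a \<Rightarrow> 'a \<Rightarrow> 'a" where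
  "imp_op ci st x y = st (ci x (st y))"

definition iff_op ::
  "('a \<Rightarrow> 'a \<Rightarrow> 'a) \<Rightarrow> ('a \<Rightarrow> 'a \<Rightarrow> 'a) \<Rightarrow> ('a \<Rightarrow> 'a) \<Rightarrow> 'a \<Rightarrow> 'a \<Rightarrow> 'a" where
  "iff_op ot ci st x y = ot (imp_op ci st x y) (imp_op ci st y x)"

definition niff_op ::
  "('a \<Rightarrow> 'a \<Rightarrow> 'a) \<Rightarrow> ('a \<Rightarrow> 'a \<Rightarrow> 'a) \<Rightarrow> ('a \<Rightarrow> 'a) \<Rightarrow> 'a \<Rightarrow> 'a \<Rightarrow> 'a" where
  "niff_op ot ci st x y = st (iff_op ot ci st x y)"

definition niff3_op ::
  "('a \<Rightarrow> 'a \<Rightarrow> 'a) \<Rightarrow> ('a \<Rightarrow> 'a \<Rightarrow> 'a) \<Rightarrow> ('a \<Rightarrow> 'a) \<Rightarrow> 'a \<Rightarrow> 'a \<Rightarrow> 'a \<Rightarrow> 'a" where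
  "niff3_op ot ci st x y z =
     ot (ot (niff_op ot ci st x y) (niff_op ot ci st x z)) (niff_op ot ci st y z)"

definition oplus_op :: "('a \<Rightarrow> 'a \<Rightarrow> 'a) \<Rightarrow> ('a \<Rightarrow> 'a) \<Rightarrow> 'a \<Rightarrow> 'a \<Rightarrow> 'a" where
  "oplus_op ot st x y = st (ot (st x) (st y))"

definition supset_op :: "('a \<Rightarrow> 'a \<Rightarrow> 'a) \<Rightarrow> ('a \<Rightarrow> 'a) \<Rightarrow> 'a \<Rightarrow> 'a \<Rightarrow> 'a" where
  "supset_op ot st x y = oplus_op ot st (st x) y"

definition Nw_model ::
  "('a \<Rightarrow> 'a \<Rightarrow> 'a) \<Rightarrow> ('a \<Rightarrow> 'a \<Rightarrow> 'a) \<Rightarrow> ('a \<Rightarrow> 'a) \<Rightarrow>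
   ('a ext \<Rightarrow> 'a ext \<Rightarrow> bool) \<Rightarrow> bool" where
  "Nw_model ot ci st perp \<longleftrightarrow> weak_N_algebra ot ci st \<and>
    (\<forall>x. perp (El x) (El (st x))) \<and>
    (\<forall>x y. perp (El x) (El (st y)) \<and> perp (El y) (El (st x)) \<longrightarrow> x = y) \<and>
    (\<forall>x y. perp (El x) (El y) \<longleftrightarrow> perp (El (ci x y)) T_el) \<and>
    (\<forall>x. perp (El x) T_el \<longleftrightarrow> perp (El (st x)) F_el) \<and>
    (\<forall>x y. (perp (El x) F_el \<and> perp (El y) F_el) \<longleftrightarrow> perp (El (ot x y)) F_el) \<and>
    (\<forall>x y. perp (El (st (ci x (st y)))) (El (st (ci x y)))) \<and>
    (\<forall>x y. perp (El x) (El y) \<and> perp (El x) F_el \<longrightarrow> perp (El y) T_el) \<and>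
    (\<forall>x y z. perp (El (niff3_op ot ci st x y z))
        (El (st (imp_op ci st (imp_op ci st x y)
                 (imp_op ci st (imp_op ci st y z) (imp_op ci st x z))))))"

definition Nw1_model ::
  "('a \<Rightarrow> 'a \<Rightarrow> 'a) \<Rightarrow> ('a \<Rightarrow> 'a \<Rightarrow> 'a) \<Rightarrow> ('a \<Rightarrow> 'a) \<Rightarrow>
   ('a ext \<Rightarrow> 'a ext \<Rightarrow> bool) \<Rightarrow> bool" where
  "Nw1_model ot ci st perp \<longleftrightarrow> Nw_model ot ci st perp \<and>
    (\<forall>x y. perp (El x) F_el \<longrightarrow> perp (El (oplus_op ot st x y)) F_el) \<and>
    (\<forall>x y z. perp (El x) (El (st y)) \<and> perp (El y) (El (st z)) \<longrightarrow> perp (El x) (El (st z)))"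

definition prec_rel :: "('a \<Rightarrow> 'a) \<Rightarrow> ('a ext \<Rightarrow> 'a ext \<Rightarrow> bool) \<Rightarrow> 'a \<Rightarrow> 'a \<Rightarrow> bool" where
  "prec_rel st perp x y \<longleftrightarrow> perp (El x) (El (st y))"

definition po_comm_inv_res_groupoid ::
  "('a \<Rightarrow> 'a \<Rightarrow> bool) \<Rightarrow> ('a \<Rightarrow> 'a \<Rightarrow> 'a) \<Rightarrow> ('a \<Rightarrow> 'a \<Rightarrow> 'a) \<Rightarrow> ('a \<Rightarrow> 'a) \<Rightarrow> bool" where
  "po_comm_inv_res_groupoid le ot res st \<longleftrightarrow>
    (\<forall>x y. ot x y = ot y x) \<and>
    (\<forall>x. le x x) \<and> (\<forall>x y. le x y \<and> le y x \<longrightarrow> x = y) \<and>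
    (\<forall>x y z. le x y \<and> le y z \<longrightarrow> le x z) \<and>
    (\<forall>x. st (st x) = x) \<and> (\<forall>x y. le x y \<longrightarrow> le (st y) (st x)) \<and>
    (\<forall>x y z. le (ot x y) z \<longleftrightarrow> le x (res y z))"

end

theory Submission
  imports Defs
begin

text \<open>Condition (c) reads \<open>x \<perp> y\<close> as \<open>x \<circ> y \<perp> t\<close>, and \<open>y \<supset> z\<close> is \<open>(y \<otimes> z\<^sup>*)\<^sup>*\<close>. Hence
  both sides of the residuation law say \<open>x \<circ> (y \<otimes> z\<^sup>*) \<perp> t\<close>, once the axiom
  \<open>(x \<otimes> y) \<circ> z = (x \<otimes> z) \<circ> y\<close> and commutativity have rewritten
  \<open>(x \<otimes> y) \<circ> z\<^sup>*\<close> into that form. The same condition with commutativity of \<open>\<circ>\<close>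
  makes \<open>\<perp>\<close> symmetric on \<open>A\<close>, so that \<open>\<^sup>*\<close> reverses \<open>\<precsim>\<close>; reflexivity and antisymmetry
  of \<open>\<precsim>\<close> are conditions (a) and (b), and transitivity is the second
  condition of an \<open>N\<^sub>w\<^sup>1\<close>-model.\<close>

lemma weak_N_algebra_ci_ot_assoc:
  assumes "weak_N_algebra ot ci st"
  shows "ci x (ot y z) = ci (ot x y) z"
proof -
  have "ci x (ot y z) = ci (ot y z) x" using assms unfolding weak_N_algebra_def by blast
  also have "\<dots> = ci (ot y x) z" using assms unfolding weak_N_algebra_def by blast
  also have "\<dots> = ci (ot x y) z" using assms unfolding weak_N_algebra_def by metis
  finally show ?thesis .
qed

lemma weak_N_algebra_st_supset_op:
  assumes "weak_N_algebra ot ci st"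
  shows "st (supset_op ot st y z) = ot y (st z)"
  using assms by (simp add: weak_N_algebra_def supset_op_def oplus_op_def)

context
  fixes ot ci :: "'a \<Rightarrow> 'a \<Rightarrow> 'a" and st :: "'a \<Rightarrow> 'a"
    and perp :: "'a ext \<Rightarrow> 'a ext \<Rightarrow> bool"
  assumes model: "Nw_model ot ci st perp"
begin

lemma Nw_model_weak_N_algebra: "weak_N_algebra ot ci st"
  using model by (simp add: Nw_model_def)

lemma Nw_model_perp_iff_ci_perp_T: "perp (El x) (El y) \<longleftrightarrow> perp (El (ci x y)) T_el"
  using model by (simp add: Nw_model_def)

lemma Nw_model_perp_sym: "perp (El x) (El y) \<Longrightarrow> perp (El y) (El x)"
  using Nw_model_weak_N_algebra
  by (simp add: Nw_model_perp_iff_ci_perp_T weak_N_algebra_def)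

lemma Nw_model_prec_residuation:
  "prec_rel st perp (ot x y) z \<longleftrightarrow> prec_rel st perp x (supset_op ot st y z)"
  using Nw_model_weak_N_algebra
  by (simp add: prec_rel_def weak_N_algebra_st_supset_op weak_N_algebra_ci_ot_assoc
      Nw_model_perp_iff_ci_perp_T[of "ot x y"] Nw_model_perp_iff_ci_perp_T[of x])

lemma Nw_model_prec_refl: "prec_rel st perp x x"
  using model unfolding Nw_model_def prec_rel_def by blast

lemma Nw_model_prec_antisym: "prec_rel st perp x y \<Longrightarrow> prec_rel st perp y x \<Longrightarrow> x = y"
  using model unfolding Nw_model_def prec_rel_def by blast

lemma Nw_model_prec_antitone_st: "prec_rel st perp x y \<Longrightarrow> prec_rel st perp (st y) (st x)"
  using Nw_model_weak_N_algebra Nw_model_perp_sym[of x "st y"]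
  by (simp add: prec_rel_def weak_N_algebra_def)

end

lemma Nw1_model_prec_trans:
  assumes "Nw1_model ot ci st perp"
  shows "prec_rel st perp x y \<Longrightarrow> prec_rel st perp y z \<Longrightarrow> prec_rel st perp x z"
  using assms unfolding Nw1_model_def prec_rel_def by blast

theorem proposition6p14:
  fixes ot ci :: "'a \<Rightarrow> 'a \<Rightarrow> 'a" and st :: "'a \<Rightarrow> 'a"
    and perp :: "'a ext \<Rightarrow> 'a ext \<Rightarrow> bool"
  assumes "Nw1_model ot ci st perp"
  shows "(\<forall>x y z. prec_rel st perp (ot x y) z \<longleftrightarrow> prec_rel st perp x (supset_op ot st y z))
    \<and> po_comm_inv_res_groupoid (prec_rel st perp) ot (supset_op ot st) st"
proof -
  have model: "Nw_model ot ci st perp"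
    using assms by (simp add: Nw1_model_def)
  have algebra: "weak_N_algebra ot ci st"
    using model by (rule Nw_model_weak_N_algebra)
  show ?thesis
    unfolding po_comm_inv_res_groupoid_def
    using algebra Nw_model_prec_residuation[OF model] Nw_model_prec_refl[OF model]
      Nw_model_prec_antisym[OF model] Nw_model_prec_antitone_st[OF model]
      Nw1_model_prec_trans[OF assms]
    unfolding weak_N_algebra_def by blast
qed

end
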